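(* Let $J=(a,b)\subseteq\mathbb R$ be an open interval (possibly unbounded) and let $A:J\to\mathbb R$ be differentiable with $|A'(x)-A'(y)|\le M|x-y|$ for all $x,y\in J$, for some constant $M>0$. Then $c^2(\mathbf z)\le 8M^2$ for every three-tuple $\mathbf z$ of distinct points on $\Gamma=\{x+iA(x):x\in J\}$.
   Context: The Menger curvature $c(\mathbf z)$ of three points $z_1,z_2,z_3\in\mathbb C$ is $0$ if they are collinear and otherwise the reciprocal of the radius of the unique circle through them. *)

theory Defs
  imports "HOL-Analysis.Analysis" "HOL-Library.Extended_Real"
begin

definition menger_curvature :: "complex \<Rightarrow> complex \<Rightarrow> complex \<Rightarrow> real" where
  "menger_curvature z1 z2 z3 =
     (if collinear {z1, z2, z3} then 0
      else 1 / (THE r. \<exists>w. dist w z1 = r \<and> dist w z2 = r \<and> dist w z3 = r))"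

end

theory Submission
  imports Defs
begin

text \<open>For three non-collinear points the circumradius formula gives
  \<open>c(z1, z2, z3) = 2 |D| / (|z1 - z2| |z1 - z3| |z2 - z3|)\<close>, where
  \<open>D = Im (conj (z2 - z1) (z3 - z1))\<close> is twice the signed area of the triangle.
  As \<open>c\<close> is symmetric, graph points may be taken with \<open>x1 < x2 < x3\<close>; then the mean
  value theorem on \<open>[x1, x2]\<close> and on \<open>[x2, x3]\<close> gives
  \<open>D = (x2 - x1) (x3 - x2) (A' \<eta> - A' \<xi>)\<close> with \<open>\<xi> < x2 < \<eta>\<close>, hence
  \<open>|D| \<le> M (x2 - x1) (x3 - x1) (x3 - x2)\<close>. As horizontal distances do not exceed distances,
  \<open>c \<le> 2 M\<close>, which is stronger than \<open>c\<^sup>2 \<le> 8 M\<^sup>2\<close>.\<close>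

lemma collinear_iff_Im_cnj_mult:
  fixes z1 z2 z3 :: complex
  shows "collinear {z1, z2, z3} \<longleftrightarrow> Im (cnj (z2 - z1) * (z3 - z1)) = 0"
proof -
  have "collinear {z1, z2, z3} \<longleftrightarrow> collinear {z2, z1, z3}"
    by (simp only: insert_commute)
  also have "\<dots> \<longleftrightarrow> collinear {0, z2 - z1, z3 - z1}"
    by (rule collinear_3) simp
  also have "\<dots> \<longleftrightarrow> (z3 - z1) / (z2 - z1) \<in> \<real>"
    by (rule collinear_iff_Reals)
  also have "\<dots> \<longleftrightarrow> Im (cnj (z2 - z1) * (z3 - z1)) = 0"
    by (cases "z2 = z1") (auto simp: complex_is_Real_iff Im_divide algebra_simps)
  finally show ?thesis .
qed

lemma dist_eq_dist_iff_inner: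
  fixes w a b :: "'a::real_inner"
  shows "dist w a = dist w b \<longleftrightarrow> 2 * inner (w - a) (b - a) = (norm (b - a))\<^sup>2"
proof -
  have "(dist w b)\<^sup>2 = (dist w a)\<^sup>2 - 2 * inner (w - a) (b - a) + (norm (b - a))\<^sup>2"
    unfolding dist_norm power2_norm_eq_inner by (simp add: inner_diff algebra_simps inner_commute)
  moreover have "dist w a = dist w b \<longleftrightarrow> (dist w a)\<^sup>2 = (dist w b)\<^sup>2"
    by (simp add: power2_eq_iff_nonneg)
  ultimately show ?thesis by linarith
qed

lemma eq_0_if_orthogonal_to_independent:
  fixes d u v :: complex
  assumes "inner d u = 0" "inner d v = 0" "Im (cnj u * v) \<noteq> 0"
  shows "d = 0"
proof -
  have "Re d * Im (cnj u * v) = Im v * inner d u - Im u * inner d v"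
    and "Im d * Im (cnj u * v) = Re u * inner d v - Re v * inner d u"
    unfolding inner_complex_def by (simp_all add: algebra_simps)
  with assms(1,2) have "Re d * Im (cnj u * v) = 0" "Im d * Im (cnj u * v) = 0"
    by simp_all
  with assms(3) show ?thesis
    by (simp add: complex_eq_iff)
qed

lemma equidistant_point_unique:
  fixes z1 z2 z3 w w' :: complex
  assumes "\<not> collinear {z1, z2, z3}"
    and "dist w z1 = dist w z2" "dist w z1 = dist w z3"
    and "dist w' z1 = dist w' z2" "dist w' z1 = dist w' z3"
  shows "w = w'"
proof -
  have "2 * inner (w - z1) (z2 - z1) = 2 * inner (w' - z1) (z2 - z1)"
    and "2 * inner (w - z1) (z3 - z1) = 2 * inner (w' - z1) (z3 - z1)"
    using assms(2-5) unfolding dist_eq_dist_iff_inner by simp_all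
  then have "inner (w - w') (z2 - z1) = 0" "inner (w - w') (z3 - z1) = 0"
    by (simp_all add: inner_diff_left)
  moreover have "Im (cnj (z2 - z1) * (z3 - z1)) \<noteq> 0"
    using assms(1) by (simp add: collinear_iff_Im_cnj_mult)
  ultimately show "w = w'"
    using eq_0_if_orthogonal_to_independent by fastforce
qed

lemma circumcentre_exists:
  fixes z1 z2 z3 :: complex
  assumes "\<not> collinear {z1, z2, z3}"
  shows "\<exists>c. dist c z1 = dist c z2 \<and> dist c z1 = dist c z3 \<and>
    dist c z1 = dist z1 z2 * dist z1 z3 * dist z2 z3 / (2 * \<bar>Im (cnj (z2 - z1) * (z3 - z1))\<bar>)"
proof -
  define u v where "u = z2 - z1" and "v = z3 - z1"
  define D where "D = Im (cnj u * v)"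
  have "D \<noteq> 0"
    using assms by (simp add: collinear_iff_Im_cnj_mult D_def u_def v_def)
  txt \<open>The centre \<open>c\<close> solves the linear system \<open>2 \<langle>c - z1, u\<rangle> = |u|\<^sup>2\<close>,
    \<open>2 \<langle>c - z1, v\<rangle> = |v|\<^sup>2\<close> of determinant \<open>D\<close>.\<close>
  define X where "X = of_real ((norm v)\<^sup>2) * u - of_real ((norm u)\<^sup>2) * v"
  define c where "c = z1 + (1 / (2 * D)) *\<^sub>R (\<i> * X)"
  have "inner (\<i> * X) u = (norm u)\<^sup>2 * D" "inner (\<i> * X) v = (norm v)\<^sup>2 * D"
    by (simp_all add: X_def D_def inner_complex_def algebra_simps)
  then have "2 * inner (c - z1) u = (norm u)\<^sup>2" "2 * inner (c - z1) v = (norm v)\<^sup>2"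
    using \<open>D \<noteq> 0\<close> by (simp_all add: c_def)
  then have "dist c z1 = dist c z2" "dist c z1 = dist c z3"
    unfolding dist_eq_dist_iff_inner u_def v_def .
  moreover have "dist c z1 = dist z1 z2 * dist z1 z3 * dist z2 z3 / (2 * \<bar>D\<bar>)"
  proof -
    have "X = u * v * cnj (v - u)"
      unfolding X_def complex_norm_square by (simp add: algebra_simps)
    then have "norm X = norm u * norm v * norm (v - u)"
      by (simp only: norm_mult complex_mod_cnj)
    moreover have "dist z1 z2 = norm u" "dist z1 z3 = norm v" "dist z2 z3 = norm (v - u)"
      by (simp_all add: u_def v_def dist_norm norm_minus_commute)
    ultimately show ?thesis
      by (simp add: c_def dist_norm norm_mult abs_mult)
  qed
  ultimately show ?thesis
    unfolding D_def u_def v_def by blast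
qed

lemma ex_equidistant_iff:
  fixes z1 z2 z3 :: complex
  assumes "\<not> collinear {z1, z2, z3}"
  shows "(\<exists>w. dist w z1 = r \<and> dist w z2 = r \<and> dist w z3 = r) \<longleftrightarrow>
    r = dist z1 z2 * dist z1 z3 * dist z2 z3 / (2 * \<bar>Im (cnj (z2 - z1) * (z3 - z1))\<bar>)"
proof -
  obtain c where c: "dist c z1 = dist c z2" "dist c z1 = dist c z3"
    and radius: "dist c z1 = dist z1 z2 * dist z1 z3 * dist z2 z3 / (2 * \<bar>Im (cnj (z2 - z1) * (z3 - z1))\<bar>)"
    using circumcentre_exists[OF assms] by blast
  have "dist w z1 = r \<and> dist w z2 = r \<and> dist w z3 = r \<longleftrightarrow> w = c \<and> r = dist c z1" for w
  proof
    assume w: "dist w z1 = r \<and> dist w z2 = r \<and> dist w z3 = r"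
    then have "w = c"
      by (intro equidistant_point_unique[OF assms _ _ c]) simp_all
    with w show "w = c \<and> r = dist c z1"
      by simp
  qed (use c in simp)
  then show ?thesis
    using radius by simp
qed

lemma menger_curvature_eq:
  assumes "\<not> collinear {z1, z2, z3}"
  shows "menger_curvature z1 z2 z3 =
    2 * \<bar>Im (cnj (z2 - z1) * (z3 - z1))\<bar> / (dist z1 z2 * dist z1 z3 * dist z2 z3)"
  using assms by (simp add: menger_curvature_def ex_equidistant_iff)

lemma menger_curvature_nonneg: "menger_curvature z1 z2 z3 \<ge> 0"
proof (cases "collinear {z1, z2, z3}")
  case True
  then show ?thesis by (simp add: menger_curvature_def)
next
  case False
  then show ?thesis by (simp add: menger_curvature_eq)
qed

lemma menger_curvature_swap12: "menger_curvature z2 z1 z3 = menger_curvature z1 z2 z3"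
  unfolding menger_curvature_def by (simp add: insert_commute conj_ac)

lemma menger_curvature_swap23: "menger_curvature z1 z3 z2 = menger_curvature z1 z2 z3"
  unfolding menger_curvature_def by (simp add: insert_commute conj_ac)

lemma second_difference_le_lipschitz_deriv:
  fixes f f' :: "real \<Rightarrow> real"
  assumes "x1 < x2" "x2 < x3"
    and deriv: "\<And>x. x \<in> {x1..x3} \<Longrightarrow> (f has_real_derivative f' x) (at x)"
    and lipschitz: "M-lipschitz_on {x1..x3} f'"
  shows "\<bar>(x2 - x1) * (f x3 - f x1) - (f x2 - f x1) * (x3 - x1)\<bar> \<le> M * (x2 - x1) * (x3 - x1) * (x3 - x2)"
proof -
  obtain \<xi> where \<xi>: "x1 < \<xi>" "\<xi> < x2" "f x2 - f x1 = (x2 - x1) * f' \<xi>"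
    using MVT2[of x1 x2 f f'] assms by auto
  obtain \<eta> where \<eta>: "x2 < \<eta>" "\<eta> < x3" "f x3 - f x2 = (x3 - x2) * f' \<eta>"
    using MVT2[of x2 x3 f f'] assms by auto
  have "f x3 - f x1 = (x3 - x2) * f' \<eta> + (x2 - x1) * f' \<xi>"
    using \<xi>(3) \<eta>(3) by linarith
  then have "(x2 - x1) * (f x3 - f x1) - (f x2 - f x1) * (x3 - x1) = (x2 - x1) * (x3 - x2) * (f' \<eta> - f' \<xi>)"
    unfolding \<xi>(3) by algebra
  moreover have "\<bar>f' \<eta> - f' \<xi>\<bar> \<le> M * (x3 - x1)"
  proof -
    have "\<bar>f' \<eta> - f' \<xi>\<bar> \<le> M * \<bar>\<eta> - \<xi>\<bar>"
      using lipschitz_onD[OF lipschitz, of \<eta> \<xi>] \<xi> \<eta> by (simp add: dist_real_def)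
    also have "\<dots> \<le> M * (x3 - x1)"
      using \<xi> \<eta> lipschitz_on_nonneg[OF lipschitz] by (intro mult_left_mono) auto
    finally show ?thesis .
  qed
  ultimately show ?thesis
    using assms(1,2) by (simp add: abs_mult mult_left_mono mult.assoc)
qed

lemma abs_diff_le_dist_Complex: "\<bar>x - x'\<bar> \<le> dist (Complex x y) (Complex x' y')"
  using abs_Re_le_cmod[of "Complex x y - Complex x' y'"] by (simp add: dist_norm)

lemma menger_curvature_sorted_graph_le:
  fixes f f' :: "real \<Rightarrow> real"
  assumes "x1 < x2" "x2 < x3"
    and deriv: "\<And>x. x \<in> {x1..x3} \<Longrightarrow> (f has_real_derivative f' x) (at x)"
    and lipschitz: "M-lipschitz_on {x1..x3} f'"
  shows "menger_curvature (Complex x1 (f x1)) (Complex x2 (f x2)) (Complex x3 (f x3)) \<le> 2 * M"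
    (is "menger_curvature ?z1 ?z2 ?z3 \<le> _")
proof (cases "collinear {?z1, ?z2, ?z3}")
  case True
  then show ?thesis
    using lipschitz_on_nonneg[OF lipschitz] by (simp add: menger_curvature_def)
next
  case False
  define P where "P = dist ?z1 ?z2 * dist ?z1 ?z3 * dist ?z2 ?z3"
  define p where "p = (x2 - x1) * (x3 - x1) * (x3 - x2)"
  have "0 < p"
    using assms(1,2) by (simp add: p_def)
  have "p \<le> P"
    unfolding p_def P_def using assms(1,2)
    by (intro mult_mono) (auto intro: order_trans[OF _ abs_diff_le_dist_Complex])
  have "0 \<le> M"
    using lipschitz by (rule lipschitz_on_nonneg)
  have "Im (cnj (?z2 - ?z1) * (?z3 - ?z1)) = (x2 - x1) * (f x3 - f x1) - (f x2 - f x1) * (x3 - x1)"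
    by (simp add: algebra_simps)
  then have "\<bar>Im (cnj (?z2 - ?z1) * (?z3 - ?z1))\<bar> \<le> M * p"
    using second_difference_le_lipschitz_deriv[OF assms] by (simp add: p_def mult.assoc)
  then have "menger_curvature ?z1 ?z2 ?z3 \<le> 2 * (M * p) / P"
    unfolding menger_curvature_eq[OF False] P_def[symmetric]
    using \<open>0 < p\<close> \<open>p \<le> P\<close> by (intro divide_right_mono) auto
  also have "\<dots> \<le> 2 * M"
    using \<open>0 < p\<close> \<open>p \<le> P\<close> \<open>0 \<le> M\<close> by (simp add: divide_le_eq mult_left_mono)
  finally show ?thesis .
qed

lemma linorder_less_wlog3_on:
  fixes P :: "'a::linorder \<Rightarrow> 'a \<Rightarrow> 'a \<Rightarrow> bool"
  assumes swap12: "\<And>a b c. P a b c \<Longrightarrow> P b a c"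
    and swap23: "\<And>a b c. P a b c \<Longrightarrow> P a c b"
    and sorted: "\<And>a b c. a \<in> S \<Longrightarrow> b \<in> S \<Longrightarrow> c \<in> S \<Longrightarrow> a < b \<Longrightarrow> b < c \<Longrightarrow> P a b c"
    and "x \<in> S" "y \<in> S" "z \<in> S" "x \<noteq> y" "y \<noteq> z" "x \<noteq> z"
  shows "P x y z"
proof -
  consider "x < y" "y < z" | "x < z" "z < y" | "y < x" "x < z"
    | "y < z" "z < x" | "z < x" "x < y" | "z < y" "y < x"
    using assms(7-9) by (meson linorder_neqE order.strict_trans)
  then show ?thesis
    using assms(4-6) by cases (metis swap12 swap23 sorted)+
qed

lemma menger_curvature_graph_le:
  fixes f f' :: "real \<Rightarrow> real" and S :: "real set"
  assumes "is_interval S"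
    and deriv: "\<And>x. x \<in> S \<Longrightarrow> (f has_real_derivative f' x) (at x)"
    and lipschitz: "M-lipschitz_on S f'"
    and "x1 \<in> S" "x2 \<in> S" "x3 \<in> S" "x1 \<noteq> x2" "x2 \<noteq> x3" "x1 \<noteq> x3"
  shows "menger_curvature (Complex x1 (f x1)) (Complex x2 (f x2)) (Complex x3 (f x3)) \<le> 2 * M"
proof -
  define \<kappa> where "\<kappa> a b c = menger_curvature (Complex a (f a)) (Complex b (f b)) (Complex c (f c))"
    for a b c
  have "\<kappa> x1 x2 x3 \<le> 2 * M"
  proof (rule linorder_less_wlog3_on[where P = "\<lambda>a b c. \<kappa> a b c \<le> 2 * M"])
    show "\<kappa> b a c \<le> 2 * M" if "\<kappa> a b c \<le> 2 * M" for a b c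
      using that by (simp add: \<kappa>_def menger_curvature_swap12)
    show "\<kappa> a c b \<le> 2 * M" if "\<kappa> a b c \<le> 2 * M" for a b c
      using that by (simp add: \<kappa>_def menger_curvature_swap23)
    show "\<kappa> a b c \<le> 2 * M" if "a \<in> S" "b \<in> S" "c \<in> S" "a < b" "b < c" for a b c
    proof -
      have "{a..c} \<subseteq> S"
        using mem_is_interval_1_I[OF \<open>is_interval S\<close> \<open>a \<in> S\<close> \<open>c \<in> S\<close>] by auto
      then show ?thesis
        unfolding \<kappa>_def using that
        by (intro menger_curvature_sorted_graph_le[where f' = f'] deriv lipschitz_on_subset[OF lipschitz]) auto
    qed
  qed fact+
  then show ?thesis
    by (simp add: \<kappa>_def)
qed

lemma is_interval_ereal_bounds: "is_interval {x::real. a < ereal x \<and> ereal x < b}"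
  (is "is_interval ?J")
  unfolding is_interval_1
proof (intro ballI allI impI)
  fix x y t
  assume "x \<in> ?J" "y \<in> ?J" "x \<le> t \<and> t \<le> y"
  then have "a < ereal x" "ereal x \<le> ereal t" "ereal t \<le> ereal y" "ereal y < b"
    by simp_all
  then show "t \<in> ?J"
    by (blast intro: less_le_trans le_less_trans)
qed

theorem lemma1p5:
  fixes a b :: ereal and A :: "real \<Rightarrow> real" and M :: real
  defines "J \<equiv> {x::real. a < ereal x \<and> ereal x < b}"
  defines "\<Gamma> \<equiv> (\<lambda>x. Complex x (A x)) ` J"
  assumes diff: "\<forall>x\<in>J. A differentiable (at x)"
    and Mpos: "M > 0"
    and lip: "\<forall>x\<in>J. \<forall>y\<in>J. \<bar>deriv A x - deriv A y\<bar> \<le> M * \<bar>x - y\<bar>"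
    and z: "z1 \<in> \<Gamma>" "z2 \<in> \<Gamma>" "z3 \<in> \<Gamma>"
    and dist: "z1 \<noteq> z2" "z2 \<noteq> z3" "z1 \<noteq> z3"
  shows "(menger_curvature z1 z2 z3)\<^sup>2 \<le> 8 * M\<^sup>2"
proof -
  obtain x1 x2 x3 where x: "x1 \<in> J" "x2 \<in> J" "x3 \<in> J"
    and zx: "z1 = Complex x1 (A x1)" "z2 = Complex x2 (A x2)" "z3 = Complex x3 (A x3)"
    using z unfolding \<Gamma>_def by blast
  have "x1 \<noteq> x2" "x2 \<noteq> x3" "x1 \<noteq> x3"
    using dist zx by auto
  have "is_interval J"
    unfolding J_def by (rule is_interval_ereal_bounds)
  moreover have "(A has_real_derivative deriv A x) (at x)" if "x \<in> J" for x
    using diff that DERIV_deriv_iff_real_differentiable by blast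
  moreover have "M-lipschitz_on J (deriv A)"
    using lip Mpos by (intro lipschitz_onI) (auto simp: dist_real_def)
  ultimately have "menger_curvature z1 z2 z3 \<le> 2 * M"
    unfolding zx using x \<open>x1 \<noteq> x2\<close> \<open>x2 \<noteq> x3\<close> \<open>x1 \<noteq> x3\<close> by (rule menger_curvature_graph_le)
  then have "(menger_curvature z1 z2 z3)\<^sup>2 \<le> (2 * M)\<^sup>2"
    using menger_curvature_nonneg by (rule power_mono)
  also have "\<dots> \<le> 8 * M\<^sup>2"
    by (simp add: power_mult_distrib)
  finally show ?thesis .
qed

end
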